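(* The map $F:\mathcal F_D\to[\mathcal F_C\to\mathcal F_R]$ is an isomorphism with inverse $G$, and $H:\mathcal F_C\to\mathcal F_D\times\mathcal F_C$ is an isomorphism with inverse $K$, where, for $d\in\mathcal F_D$, $k\in\mathcal F_C$ and $f\in[\mathcal F_C\to\mathcal F_R]$: - $F\,d\,k=d\cdot k$; - $G\,f=\uparrow_D\{\bigwedge_{i\in I}\kappa_i\to\rho_i\mid \forall i\in I:\ \rho_i\in f(\uparrow_C\kappa_i)\}$; - $H\,k=\langle\{\delta\mid\exists\kappa.\ \delta\times\kappa\in k\},\{\kappa\mid\exists\delta.\ \delta\times\kappa\in k\}\rangle$; - $K\langle d,k\rangle=d::k$.
   Context: Let $R$ be an $\omega$-algebraic lattice, with compact elements $\mathcal K(R)$, bottom $\bot$ and join $\sqcup$. Type languages: - $\Lambda_R$: $\rho::=\psi_a\mid\omega\mid\rho\wedge\rho$, with one constant $\psi_a$ for each $a\in\mathcal K(R)$. - $\Lambda_D$: $\delta::=\rho\mid\kappa\to\rho\mid\omega\mid\delta\wedge\delta$, with $\rho\in\Lambda_R$. - $\Lambda_C$: $\kappa::=\delta\times\kappa\mid\omega\mid\kappa\wedge\kappa$. An intersection type theory is a reflexive, transitive relation $\le$ satisfying $\sigma\wedge\tau\le\sigma$, $\sigma\wedge\tau\le\tau$, $\sigma\le\omega$, and, if $\rho\le\sigma$ and $\rho\le\tau$, then $\rho\le\sigma\wedge\tau$. We write $\sigma\sim\tau$ when $\sigma\le\tau\le\sigma$. The relations are defined as follows: - $\le_R$ is the least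 intersection type theory on $\Lambda_R$ with $\psi_\bot\sim_R\omega$ and $\psi_{a\sqcup b}\sim_R\psi_a\wedge\psi_b$. - $\le_D$ and $\le_C$ are the least intersection type theories on $\Lambda_D$ and $\Lambda_C$ closed under the following: - if $\rho_1\le_R\rho_2$ then $\rho_1\le_D\rho_2$; - $\omega\le_D\omega\to\omega$; - $\psi_a\le_D\omega\to\psi_a$ and $\omega\to\psi_a\le_D\psi_a$; - $\omega\le_C\omega\times\omega$; - $(\kappa\to\rho_1)\wedge(\kappa\to\rho_2)\le_D\kappa\to(\rho_1\wedge\rho_2)$; - $(\delta_1\times\kappa_1)\wedge(\delta_2\times\kappa_2)\le_C(\delta_1\wedge\delta_2)\times(\kappa_1\wedge\kappa_2)$; - if $\kappa_2\le_C\kappa_1$ and $\rho_1\le_R\rho_2$ then $\kappa_1\to\rho_1\le_D\kappa_2\to\rho_2$; - if $\delta_1\le_D\delta_2$ and $\kappa_1\le_C\kappa_2$ then $\delta_1\times\kappa_1\le_C\delta_2\times\kappa_2$. A filter over $(\Lambda_A,\le_A)$ is a set containing $\omega$, upward closed under $\le_A$, and closed under $\wedge$. $\mathcal F_A$ is the set of filters, ordered by $\subseteq$. For a set $S$ of types, $\uparrow_A S$ is its upward closure, and $\uparrow_A\sigma=\{\tau\mid\sigma\le_A\tau\}$. $[\mathcal F_C\to\mathcal F_R]$ is the set of Scott-continuous functions, ordered pointwise, and $\mathcal F_D\times\mathcal F_C$ is ordered componentwise. The two operations are: - $d\cdot k=\uparrow_R\{\rho\in\Lambda_R\mid \exists\,\kappa\to\rho\in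 d \text{ with }\kappa\in k\}$; - $d::k=\uparrow_C\{\bigwedge_{i\in I}\delta_i\times\kappa_i\mid\forall i\in I:\ \delta_i\in d,\ \kappa_i\in k\}$. In both, $I$ ranges over finite sets, and the empty intersection is $\omega$. *)

theory Defs
  imports Main "HOL-Library.Countable_Set"
begin

definition directed_set :: "'a::order set \<Rightarrow> bool" where
  "directed_set D \<longleftrightarrow> D \<noteq> {} \<and> (\<forall>x\<in>D. \<forall>y\<in>D. \<exists>z\<in>D. x \<le> z \<and> y \<le> z)"

definition compact_el :: "'a::complete_lattice \<Rightarrow> bool" where
  "compact_el a \<longleftrightarrow> (\<forall>D. directed_set D \<and> a \<le> Sup D \<longrightarrow> (\<exists>x\<in>D. a \<le> x))"

definition omega_algebraic :: "'a::complete_lattice itself \<Rightarrow> bool" where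
  "omega_algebraic _ \<longleftrightarrow>
     (\<forall>x::'a. x = Sup {c. compact_el c \<and> c \<le> x}) \<and> countable {c::'a. compact_el c}"

text \<open>One raw syntax for all three languages; omega and intersection are shared,
  so that Lambda_R is literally a subset of Lambda_D.\<close>
datatype 'a ty = Psi 'a | Om | And "'a ty" "'a ty" | Arr "'a ty" "'a ty" | Prod "'a ty" "'a ty"

fun isR :: "'a::complete_lattice ty \<Rightarrow> bool" where
  "isR (Psi a) = compact_el a"
| "isR Om = True"
| "isR (And s t) = (isR s \<and> isR t)"
| "isR (Arr _ _) = False"
| "isR (Prod _ _) = False"

fun isD :: "'a::complete_lattice ty \<Rightarrow> bool" and isC :: "'a::complete_lattice ty \<Rightarrow> bool" where
  "isD (Psi a) = compact_el a"
| "isD Om = True"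
| "isD (And s t) = (isD s \<and> isD t)"
| "isD (Arr k r) = (isC k \<and> isR r)"
| "isD (Prod _ _) = False"
| "isC (Psi _) = False"
| "isC Om = True"
| "isC (And s t) = (isC s \<and> isC t)"
| "isC (Arr _ _) = False"
| "isC (Prod d k) = (isD d \<and> isC k)"

inductive leR :: "'a::complete_lattice ty \<Rightarrow> 'a ty \<Rightarrow> bool" where
  reflR: "isR s \<Longrightarrow> leR s s"
| transR: "leR s t \<Longrightarrow> leR t u \<Longrightarrow> leR s u"
| andR1: "isR s \<Longrightarrow> isR t \<Longrightarrow> leR (And s t) s"
| andR2: "isR s \<Longrightarrow> isR t \<Longrightarrow> leR (And s t) t"
| omR: "isR s \<Longrightarrow> leR s Om"
| glbR: "leR r s \<Longrightarrow> leR r t \<Longrightarrow> leR r (And s t)"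
| botR1: "leR (Psi bot) Om"
| botR2: "leR Om (Psi bot)"
| joinR1: "compact_el a \<Longrightarrow> compact_el b \<Longrightarrow> leR (Psi (sup a b)) (And (Psi a) (Psi b))"
| joinR2: "compact_el a \<Longrightarrow> compact_el b \<Longrightarrow> leR (And (Psi a) (Psi b)) (Psi (sup a b))"

inductive leD :: "'a::complete_lattice ty \<Rightarrow> 'a ty \<Rightarrow> bool"
  and leC :: "'a::complete_lattice ty \<Rightarrow> 'a ty \<Rightarrow> bool" where
  reflD: "isD s \<Longrightarrow> leD s s"
| transD: "leD s t \<Longrightarrow> leD t u \<Longrightarrow> leD s u"
| andD1: "isD s \<Longrightarrow> isD t \<Longrightarrow> leD (And s t) s"
| andD2: "isD s \<Longrightarrow> isD t \<Longrightarrow> leD (And s t) t"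
| omD: "isD s \<Longrightarrow> leD s Om"
| glbD: "leD r s \<Longrightarrow> leD r t \<Longrightarrow> leD r (And s t)"
| fromR: "leR r1 r2 \<Longrightarrow> leD r1 r2"
| omArr: "leD Om (Arr Om Om)"
| psiArr1: "compact_el a \<Longrightarrow> leD (Psi a) (Arr Om (Psi a))"
| psiArr2: "compact_el a \<Longrightarrow> leD (Arr Om (Psi a)) (Psi a)"
| arrAnd: "isC k \<Longrightarrow> isR r1 \<Longrightarrow> isR r2 \<Longrightarrow> leD (And (Arr k r1) (Arr k r2)) (Arr k (And r1 r2))"
| arrMono: "leC k2 k1 \<Longrightarrow> leR r1 r2 \<Longrightarrow> leD (Arr k1 r1) (Arr k2 r2)"
| reflC: "isC s \<Longrightarrow> leC s s"
| transC: "leC s t \<Longrightarrow> leC t u \<Longrightarrow> leC s u"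
| andC1: "isC s \<Longrightarrow> isC t \<Longrightarrow> leC (And s t) s"
| andC2: "isC s \<Longrightarrow> isC t \<Longrightarrow> leC (And s t) t"
| omC: "isC s \<Longrightarrow> leC s Om"
| glbC: "leC r s \<Longrightarrow> leC r t \<Longrightarrow> leC r (And s t)"
| omProd: "leC Om (Prod Om Om)"
| prodAnd: "isD d1 \<Longrightarrow> isD d2 \<Longrightarrow> isC k1 \<Longrightarrow> isC k2 \<Longrightarrow>
     leC (And (Prod d1 k1) (Prod d2 k2)) (Prod (And d1 d2) (And k1 k2))"
| prodMono: "leD d1 d2 \<Longrightarrow> leC k1 k2 \<Longrightarrow> leC (Prod d1 k1) (Prod d2 k2)"

fun bigAnd :: "'a ty list \<Rightarrow> 'a ty" where
  "bigAnd [] = Om"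
| "bigAnd [t] = t"
| "bigAnd (t # ts) = And t (bigAnd ts)"

definition is_filter :: "('a ty \<Rightarrow> bool) \<Rightarrow> ('a ty \<Rightarrow> 'a ty \<Rightarrow> bool) \<Rightarrow> 'a ty set \<Rightarrow> bool" where
  "is_filter L le S \<longleftrightarrow> S \<subseteq> {t. L t} \<and> Om \<in> S \<and> (\<forall>s\<in>S. \<forall>t. le s t \<longrightarrow> t \<in> S)
     \<and> (\<forall>s\<in>S. \<forall>t\<in>S. And s t \<in> S)"

definition upc :: "('a ty \<Rightarrow> 'a ty \<Rightarrow> bool) \<Rightarrow> 'a ty set \<Rightarrow> 'a ty set" where
  "upc le S = {t. \<exists>s\<in>S. le s t}"

definition FR :: "'a::complete_lattice ty set set" where "FR = {S. is_filter isR leR S}"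
definition FD :: "'a::complete_lattice ty set set" where "FD = {S. is_filter isD leD S}"
definition FC :: "'a::complete_lattice ty set set" where "FC = {S. is_filter isC leC S}"

text \<open>Scott-continuous maps F_C -> F_R (values outside F_C are irrelevant).
  Directed sups of filters are unions.\<close>
definition scott_cont :: "('a::complete_lattice ty set \<Rightarrow> 'a ty set) \<Rightarrow> bool" where
  "scott_cont f \<longleftrightarrow> (\<forall>k\<in>FC. f k \<in> FR)
     \<and> (\<forall>k\<in>FC. \<forall>k'\<in>FC. k \<subseteq> k' \<longrightarrow> f k \<subseteq> f k')
     \<and> (\<forall>Ds. Ds \<subseteq> FC \<and> directed_set Ds \<longrightarrow> f (\<Union>Ds) = \<Union>(f ` Ds))"

definition app :: "'a::complete_lattice ty set \<Rightarrow> 'a ty set \<Rightarrow> 'a ty set" where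
  "app d k = upc leR {r. isR r \<and> (\<exists>\<kappa>. Arr \<kappa> r \<in> d \<and> \<kappa> \<in> k)}"

definition cons :: "'a::complete_lattice ty set \<Rightarrow> 'a ty set \<Rightarrow> 'a ty set" where
  "cons d k = upc leC {bigAnd (map (\<lambda>(\<delta>, \<kappa>). Prod \<delta> \<kappa>) ps) | ps.
                         \<forall>(\<delta>, \<kappa>)\<in>set ps. \<delta> \<in> d \<and> \<kappa> \<in> k}"

definition Fmap :: "'a::complete_lattice ty set \<Rightarrow> 'a ty set \<Rightarrow> 'a ty set" where
  "Fmap d = (\<lambda>k. app d k)"

definition Gmap :: "('a::complete_lattice ty set \<Rightarrow> 'a ty set) \<Rightarrow> 'a ty set" where
  "Gmap f = upc leD {bigAnd (map (\<lambda>(\<kappa>, r). Arr \<kappa> r) ps) | ps.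
                        \<forall>(\<kappa>, r)\<in>set ps. isC \<kappa> \<and> isR r \<and> r \<in> f (upc leC {\<kappa>})}"

definition Hmap :: "'a::complete_lattice ty set \<Rightarrow> 'a ty set \<times> 'a ty set" where
  "Hmap k = ({\<delta>. \<exists>\<kappa>. Prod \<delta> \<kappa> \<in> k}, {\<kappa>. \<exists>\<delta>. Prod \<delta> \<kappa> \<in> k})"

definition Kmap :: "'a::complete_lattice ty set \<times> 'a ty set \<Rightarrow> 'a ty set" where
  "Kmap p = cons (fst p) (snd p)"

end

theory Submission
  imports Defs
begin

text \<open>Everything rests on two inversion lemmas for the subtyping relations. Every D-type is
  equivalent to a finite intersection of arrows and every C-type to a finite intersection of
  products. If \<open>\<sigma> \<le>\<^sub>D \<kappa> \<rightarrow> \<rho>\<close>, then \<open>\<rho>\<close> is entailed by the targets \<open>\<rho>'\<close> of those arrows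
  \<open>\<kappa>' \<rightarrow> \<rho>'\<close> of \<open>\<sigma>\<close> with \<open>\<kappa> \<le>\<^sub>C \<kappa>'\<close>; if \<open>\<sigma> \<le>\<^sub>C \<delta> \<times> \<kappa>\<close>, then \<open>\<delta>\<close> and \<open>\<kappa>\<close> are entailed by the
  first and second components of the products of \<open>\<sigma>\<close>. Hence a filter generated by arrows
  (or products) contains no arrow (or product) that is not forced by its generators, which
  gives \<open>F (G f) = f\<close> and \<open>H (K \<langle>d, k\<rangle>) = \<langle>d, k\<rangle>\<close>; the other two identities say that a filter is
  generated by the arrows (products) it contains. For \<open>F (G f) = f\<close> one also uses that every
  C-filter is the directed union of the principal filters \<open>\<up>\<^sub>C \<kappa>\<close> it contains, so a continuous
  \<open>f\<close> is determined by its values on them.\<close>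

section \<open>Intersection type theories\<close>

lemma compact_el_sup:
  assumes "compact_el a" and "compact_el b"
  shows "compact_el (sup a b)"
  unfolding compact_el_def
proof (intro allI impI)
  fix D assume D: "directed_set D \<and> sup a b \<le> Sup D"
  then obtain x y where xy: "x \<in> D" "a \<le> x" "y \<in> D" "b \<le> y"
    using assms unfolding compact_el_def by (meson le_sup_iff)
  with D obtain z where "z \<in> D" "x \<le> z" "y \<le> z"
    unfolding directed_set_def by blast
  with xy show "\<exists>z\<in>D. sup a b \<le> z"
    by (meson le_sup_iff order_trans)
qed

lemma compact_el_bot: "compact_el (bot::'a::complete_lattice)"
  unfolding compact_el_def directed_set_def by auto

lemma leR_isR: "leR s t \<Longrightarrow> isR s \<and> isR t"
  by (induct rule: leR.induct) (auto simp: compact_el_sup compact_el_bot)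

lemma isR_imp_isD: "isR t \<Longrightarrow> isD t"
  by (induct t) auto

lemma leD_isD: "leD s t \<Longrightarrow> isD s \<and> isD t"
  and leC_isC: "leC s t \<Longrightarrow> isC s \<and> isC t"
  by (induct rule: leD_leC.inducts) (auto simp: isR_imp_isD dest: leR_isR)

lemma is_filter_L: "is_filter L le S \<Longrightarrow> t \<in> S \<Longrightarrow> L t"
  and is_filter_Om: "is_filter L le S \<Longrightarrow> Om \<in> S"
  and is_filter_upward: "is_filter L le S \<Longrightarrow> s \<in> S \<Longrightarrow> le s t \<Longrightarrow> t \<in> S"
  and is_filter_And: "is_filter L le S \<Longrightarrow> s \<in> S \<Longrightarrow> t \<in> S \<Longrightarrow> And s t \<in> S"
  unfolding is_filter_def by blast+

lemma is_filter_bigAnd: "is_filter L le S \<Longrightarrow> set xs \<subseteq> S \<Longrightarrow> bigAnd xs \<in> S"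
  by (induct xs rule: bigAnd.induct) (auto intro: is_filter_Om is_filter_And)

lemma upc_singleton: "upc le {t} = {u. le t u}"
  unfolding upc_def by blast

lemma bigAnd_map_eq:
  "{bigAnd (map (\<lambda>(a, b). g a b) ps) | ps. \<forall>(a, b)\<in>set ps. P a b}
     = {bigAnd xs | xs. set xs \<subseteq> {g a b | a b. P a b}}"
proof -
  have pre: "\<exists>ps. xs = map (\<lambda>(a, b). g a b) ps \<and> (\<forall>(a, b)\<in>set ps. P a b)"
    if "set xs \<subseteq> {g a b | a b. P a b}" for xs
    using that
  proof (induct xs)
    case (Cons x xs)
    then obtain a b ps where "x = g a b" "P a b"
      "xs = map (\<lambda>(a, b). g a b) ps" "\<forall>(a, b)\<in>set ps. P a b"
      by auto
    then show ?case by (intro exI[of _ "(a, b) # ps"]) auto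
  qed simp
  have img: "set (map (\<lambda>(a, b). g a b) ps) \<subseteq> {g a b | a b. P a b}"
    if "\<forall>(a, b)\<in>set ps. P a b" for ps
    using that by fastforce
  show ?thesis
  proof (intro equalityI subsetI)
    fix t assume "t \<in> {bigAnd (map (\<lambda>(a, b). g a b) ps) | ps. \<forall>(a, b)\<in>set ps. P a b}"
    with img show "t \<in> {bigAnd xs | xs. set xs \<subseteq> {g a b | a b. P a b}}" by blast
  next
    fix t assume "t \<in> {bigAnd xs | xs. set xs \<subseteq> {g a b | a b. P a b}}"
    with pre show "t \<in> {bigAnd (map (\<lambda>(a, b). g a b) ps) | ps. \<forall>(a, b)\<in>set ps. P a b}"
      by blast
  qed
qed

locale intersection_type_theory =
  fixes L :: "'a ty \<Rightarrow> bool" and le :: "'a ty \<Rightarrow> 'a ty \<Rightarrow> bool"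
  assumes le_refl: "L s \<Longrightarrow> le s s"
    and le_trans: "le s t \<Longrightarrow> le t u \<Longrightarrow> le s u"
    and le_And1: "L s \<Longrightarrow> L t \<Longrightarrow> le (And s t) s"
    and le_And2: "L s \<Longrightarrow> L t \<Longrightarrow> le (And s t) t"
    and le_Om: "L s \<Longrightarrow> le s Om"
    and le_glb: "le r s \<Longrightarrow> le r t \<Longrightarrow> le r (And s t)"
    and le_L: "le s t \<Longrightarrow> L s \<and> L t"
    and L_Om: "L Om"
    and L_And: "L (And s t) \<longleftrightarrow> L s \<and> L t"
begin

lemma L_bigAnd: "\<forall>x\<in>set xs. L x \<Longrightarrow> L (bigAnd xs)"
  by (induct xs rule: bigAnd.induct) (auto simp: L_Om L_And)

lemma le_bigAnd_member: "\<forall>x\<in>set xs. L x \<Longrightarrow> x \<in> set xs \<Longrightarrow> le (bigAnd xs) x"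
proof (induct xs rule: bigAnd.induct)
  case (3 t u ts)
  then have L: "L t" "L (bigAnd (u # ts))"
    using L_bigAnd[of "u # ts"] by auto
  show ?case
  proof (cases "x = t")
    case True
    with L show ?thesis by (simp add: le_And1)
  next
    case False
    with 3 have "le (bigAnd (u # ts)) x" by simp
    with L show ?thesis by (simp add: le_trans[OF le_And2])
  qed
qed (auto intro: le_refl)

lemma le_bigAnd_glb: "L s \<Longrightarrow> \<forall>x\<in>set xs. le s x \<Longrightarrow> le s (bigAnd xs)"
  by (induct xs rule: bigAnd.induct) (auto simp: le_Om le_glb)

lemma le_bigAnd_subset:
  "\<forall>x\<in>set ys. L x \<Longrightarrow> set xs \<subseteq> set ys \<Longrightarrow> le (bigAnd ys) (bigAnd xs)"
  by (rule le_bigAnd_glb) (auto intro: L_bigAnd le_bigAnd_member)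

lemma le_And_mono: "le a b \<Longrightarrow> le c d \<Longrightarrow> le (And a c) (And b d)"
  by (metis le_And1 le_And2 le_L le_glb le_trans)

lemma le_bigAnd_append:
  assumes "\<forall>x\<in>set (xs @ ys). L x" and "le (bigAnd xs) s" and "le (bigAnd ys) t"
  shows "le (bigAnd (xs @ ys)) (And s t)"
proof -
  have "le (bigAnd (xs @ ys)) (And (bigAnd xs) (bigAnd ys))"
    using assms(1) by (intro le_glb le_bigAnd_subset) auto
  then show ?thesis
    using assms(2,3) by (rule le_trans[OF _ le_And_mono])
qed

definition entails :: "'a ty set \<Rightarrow> 'a ty \<Rightarrow> bool" where
  "entails X t \<longleftrightarrow> (\<exists>xs. set xs \<subseteq> X \<and> le (bigAnd xs) t)"

lemma upc_bigAnd_eq_entails: "upc le {bigAnd xs |xs. set xs \<subseteq> X} = {t. entails X t}"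
  unfolding upc_def entails_def by blast

lemma entails_Om: "entails X Om"
  unfolding entails_def by (rule exI[of _ "[]"]) (simp add: le_refl L_Om)

lemma entails_member: "L t \<Longrightarrow> t \<in> X \<Longrightarrow> entails X t"
  unfolding entails_def by (rule exI[of _ "[t]"]) (simp add: le_refl)

lemma entails_mono: "entails X t \<Longrightarrow> X \<subseteq> Y \<Longrightarrow> entails Y t"
  unfolding entails_def by blast

lemma entails_upward: "entails X s \<Longrightarrow> le s t \<Longrightarrow> entails X t"
  unfolding entails_def using le_trans by blast

lemma entails_L: "entails X t \<Longrightarrow> L t"
  unfolding entails_def using le_L by blast

lemma entails_And:
  assumes X: "X \<subseteq> Collect L" and "entails X s" and "entails X t"
  shows "entails X (And s t)"
proof -
  from assms(2,3) obtain xs ys where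
    "set xs \<subseteq> X" "set ys \<subseteq> X" "le (bigAnd xs) s" "le (bigAnd ys) t"
    unfolding entails_def by blast
  moreover from X this(1,2) have "\<forall>x\<in>set (xs @ ys). L x"
    by auto
  ultimately have "set (xs @ ys) \<subseteq> X" "le (bigAnd (xs @ ys)) (And s t)"
    by (auto intro: le_bigAnd_append)
  then show ?thesis unfolding entails_def by blast
qed

lemma entails_bigAnd:
  "X \<subseteq> Collect L \<Longrightarrow> \<forall>y\<in>set ys. entails X y \<Longrightarrow> entails X (bigAnd ys)"
  by (induct ys rule: bigAnd.induct) (auto simp: entails_Om entails_And)

lemma entails_trans:
  "X \<subseteq> Collect L \<Longrightarrow> \<forall>y\<in>Y. entails X y \<Longrightarrow> entails Y t \<Longrightarrow> entails X t"
  unfolding entails_def[of Y] by (metis entails_bigAnd entails_upward subset_eq)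

lemma is_filter_entails: "is_filter L le S \<Longrightarrow> X \<subseteq> S \<Longrightarrow> entails X t \<Longrightarrow> t \<in> S"
  unfolding entails_def by (meson is_filter_bigAnd is_filter_upward order_trans)

lemma is_filter_generated: "X \<subseteq> Collect L \<Longrightarrow> is_filter L le {t. entails X t}"
  unfolding is_filter_def using entails_Om entails_And entails_upward entails_L by blast

lemma is_filter_principal: "L t \<Longrightarrow> is_filter L le (upc le {t})"
  unfolding upc_singleton is_filter_def using le_L le_Om le_trans le_glb by blast

end

interpretation R: intersection_type_theory "isR :: 'a::complete_lattice ty \<Rightarrow> bool" leR
  by unfold_locales (auto intro: leR.intros dest: leR_isR)

interpretation D: intersection_type_theory "isD :: 'a::complete_lattice ty \<Rightarrow> bool" leD
  by unfold_locales (auto intro: leD_leC.intros dest: leD_isD)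

interpretation C: intersection_type_theory "isC :: 'a::complete_lattice ty \<Rightarrow> bool" leC
  by unfold_locales (auto intro: leD_leC.intros dest: leC_isC)

declare transD [trans]

lemma FR_is_filter: "f \<in> FR \<Longrightarrow> is_filter isR leR f"
  and FD_is_filter: "d \<in> FD \<Longrightarrow> is_filter isD leD d"
  and FC_is_filter: "k \<in> FC \<Longrightarrow> is_filter isC leC k"
  unfolding FR_def FD_def FC_def by simp_all

lemma principal_in_FC: "isC \<kappa> \<Longrightarrow> upc leC {\<kappa>} \<in> FC"
  unfolding FC_def by (simp add: C.is_filter_principal)

section \<open>Decomposition and inversion\<close>

text \<open>\<open>\<psi>\<^sub>a\<close> counts as the arrow \<open>\<omega> \<rightarrow> \<psi>\<^sub>a\<close>, to which it is equivalent.\<close>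

fun arrows :: "'a ty \<Rightarrow> ('a ty \<times> 'a ty) list" where
  "arrows (Psi a) = [(Om, Psi a)]"
| "arrows Om = []"
| "arrows (And s t) = arrows s @ arrows t"
| "arrows (Arr k r) = [(k, r)]"
| "arrows (Prod _ _) = []"

fun factors :: "'a ty \<Rightarrow> ('a ty \<times> 'a ty) list" where
  "factors (Psi a) = []"
| "factors Om = []"
| "factors (And s t) = factors s @ factors t"
| "factors (Arr k r) = []"
| "factors (Prod d k) = [(d, k)]"

lemma arrows_bigAnd: "arrows (bigAnd xs) = concat (map arrows xs)"
  by (induct xs rule: bigAnd.induct) auto

lemma factors_bigAnd: "factors (bigAnd xs) = concat (map factors xs)"
  by (induct xs rule: bigAnd.induct) auto

lemma arrows_isR:
  fixes r :: "'a::complete_lattice ty"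
  assumes "isR r"
  shows "(\<forall>(\<kappa>, \<rho>)\<in>set (arrows r). \<kappa> = Om \<and> isR \<rho> \<and> leR r \<rho>)
    \<and> leR (bigAnd (map snd (arrows r))) r"
  using assms
proof (induct r)
  case (And s t)
  then have st: "isR s" "isR t" by simp_all
  with And have "leR (bigAnd (map snd (arrows s) @ map snd (arrows t))) (And s t)"
    by (intro R.le_bigAnd_append) (auto dest: leR_isR)
  with And st show ?case
    using leR.transR[OF leR.andR1[OF st]] leR.transR[OF leR.andR2[OF st]] by auto
qed (auto intro: leR.reflR)

lemma arrows_isD:
  fixes t :: "'a::complete_lattice ty"
  assumes "isD t"
  shows "(\<forall>(\<kappa>, \<rho>)\<in>set (arrows t). isC \<kappa> \<and> isR \<rho> \<and> leD t (Arr \<kappa> \<rho>))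
    \<and> leD (bigAnd (map (\<lambda>(\<kappa>, \<rho>). Arr \<kappa> \<rho>) (arrows t))) t"
  using assms
proof (induct t)
  case (And s t)
  then have st: "isD s" "isD t" by simp_all
  with And have "leD (bigAnd (map (\<lambda>(\<kappa>, \<rho>). Arr \<kappa> \<rho>) (arrows s)
      @ map (\<lambda>(\<kappa>, \<rho>). Arr \<kappa> \<rho>) (arrows t))) (And s t)"
    by (intro D.le_bigAnd_append) (auto dest: leD_isD)
  with And st show ?case
    using transD[OF andD1[OF st]] transD[OF andD2[OF st]] by auto
qed (auto intro: reflD psiArr1 psiArr2)

lemma factors_isC:
  fixes t :: "'a::complete_lattice ty"
  assumes "isC t"
  shows "(\<forall>(\<delta>, \<kappa>)\<in>set (factors t). isD \<delta> \<and> isC \<kappa> \<and> leC t (Prod \<delta> \<kappa>))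
    \<and> leC (bigAnd (map (\<lambda>(\<delta>, \<kappa>). Prod \<delta> \<kappa>) (factors t))) t"
  using assms
proof (induct t)
  case (And s t)
  then have st: "isC s" "isC t" by simp_all
  with And have "leC (bigAnd (map (\<lambda>(\<delta>, \<kappa>). Prod \<delta> \<kappa>) (factors s)
      @ map (\<lambda>(\<delta>, \<kappa>). Prod \<delta> \<kappa>) (factors t))) (And s t)"
    by (intro C.le_bigAnd_append) (auto dest: leC_isC)
  with And st show ?case
    using transC[OF andC1[OF st]] transC[OF andC2[OF st]] by auto
qed (auto intro: reflC)

definition arrow_targets :: "'a::complete_lattice ty \<Rightarrow> 'a ty \<Rightarrow> 'a ty set" where
  "arrow_targets s \<kappa> = {\<rho>. \<exists>\<kappa>'. (\<kappa>', \<rho>) \<in> set (arrows s) \<and> leC \<kappa> \<kappa>'}"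

lemma arrow_targets_isR: "isD s \<Longrightarrow> arrow_targets s \<kappa> \<subseteq> Collect isR"
  unfolding arrow_targets_def using arrows_isD by fastforce

lemma entails_arrow_targets_of_subset:
  assumes "isD s" and "set (arrows t) \<subseteq> set (arrows s)"
  shows "\<forall>(\<kappa>, \<rho>)\<in>set (arrows t). R.entails (arrow_targets s \<kappa>) \<rho>"
proof (intro ballI, clarify)
  fix \<kappa> \<rho> assume "(\<kappa>, \<rho>) \<in> set (arrows t)"
  with assms have "(\<kappa>, \<rho>) \<in> set (arrows s)" "isC \<kappa>" "isR \<rho>"
    using arrows_isD by blast+
  then show "R.entails (arrow_targets s \<kappa>) \<rho>"
    unfolding arrow_targets_def by (blast intro: R.entails_member reflC)
qed

lemma leR_imp_entails_arrow_targets: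
  assumes "leR r1 r2"
  shows "\<forall>(\<kappa>, \<rho>)\<in>set (arrows r2). R.entails (arrow_targets r1 \<kappa>) \<rho>"
proof (intro ballI, clarify)
  have r: "isR r1" "isR r2" using leR_isR[OF assms] by simp_all
  fix \<kappa> \<rho> assume "(\<kappa>, \<rho>) \<in> set (arrows r2)"
  with arrows_isR[OF r(2)] have "\<kappa> = Om" "leR r2 \<rho>" by auto
  with arrows_isR[OF r(1)] have "set (map snd (arrows r1)) \<subseteq> arrow_targets r1 \<kappa>"
    unfolding arrow_targets_def by (force intro: reflC)
  moreover have "leR (bigAnd (map snd (arrows r1))) \<rho>"
    using arrows_isR[OF r(1)] assms \<open>leR r2 \<rho>\<close> by (blast intro: leR.transR)
  ultimately show "R.entails (arrow_targets r1 \<kappa>) \<rho>"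
    unfolding R.entails_def by blast
qed

lemma leD_imp_entails_arrow_targets:
  "leD s t \<Longrightarrow> \<forall>(\<kappa>, \<rho>)\<in>set (arrows t). R.entails (arrow_targets s \<kappa>) \<rho>"
proof (induct rule: leD_leC.inducts(1)[where ?P2.0 = "\<lambda>_ _. True"])
  case (transD s t u)
  have "R.entails (arrow_targets s \<kappa>) \<rho>" if "\<rho> \<in> arrow_targets t \<kappa>" for \<kappa> \<rho>
  proof -
    from that obtain \<kappa>' where "(\<kappa>', \<rho>) \<in> set (arrows t)" "leC \<kappa> \<kappa>'"
      unfolding arrow_targets_def by blast
    moreover from this(2) have "arrow_targets s \<kappa>' \<subseteq> arrow_targets s \<kappa>"
      unfolding arrow_targets_def by (blast intro: transC)
    ultimately show ?thesis
      using transD(2) by (blast intro: R.entails_mono)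
  qed
  moreover have "arrow_targets s \<kappa> \<subseteq> Collect isR" for \<kappa>
    using transD(1) by (intro arrow_targets_isR) (simp add: leD_isD)
  ultimately have "R.entails (arrow_targets t \<kappa>) \<rho> \<Longrightarrow> R.entails (arrow_targets s \<kappa>) \<rho>"
    for \<kappa> \<rho>
    by (meson R.entails_trans)
  with transD(4) show ?case by auto
next
  case (fromR r1 r2)
  then show ?case by (rule leR_imp_entails_arrow_targets)
next
  case (arrAnd \<kappa> r1 r2)
  let ?X = "arrow_targets (And (Arr \<kappa> r1) (Arr \<kappa> r2)) \<kappa>"
  have "?X \<subseteq> Collect isR"
    using arrAnd by (intro arrow_targets_isR) simp
  moreover have "R.entails ?X r1" "R.entails ?X r2"
    using arrAnd unfolding arrow_targets_def by (auto intro!: R.entails_member reflC)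
  ultimately show ?case by (simp add: R.entails_And)
next
  case (arrMono \<kappa>2 \<kappa>1 r1 r2)
  then have "R.entails (arrow_targets (Arr \<kappa>1 r1) \<kappa>2) r1"
    unfolding arrow_targets_def by (auto intro!: R.entails_member dest: leR_isR)
  with arrMono show ?case by (simp add: R.entails_upward)
next
  case (reflD s)
  then show ?case by (rule entails_arrow_targets_of_subset) simp
next
  case (andD1 s t)
  then show ?case by (intro entails_arrow_targets_of_subset) simp_all
next
  case (andD2 s t)
  then show ?case by (intro entails_arrow_targets_of_subset) simp_all
next
  case (psiArr1 a)
  then show ?case by (intro entails_arrow_targets_of_subset) simp_all
next
  case (psiArr2 a)
  then show ?case by (intro entails_arrow_targets_of_subset) simp_all
qed (auto simp: R.entails_Om)

lemma entails_factors_of_subset: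
  assumes "isC s" and "set (factors t) \<subseteq> set (factors s)"
  shows "\<forall>(\<delta>, \<kappa>)\<in>set (factors t).
    D.entails (fst ` set (factors s)) \<delta> \<and> C.entails (snd ` set (factors s)) \<kappa>"
proof (intro ballI, clarify)
  fix \<delta> \<kappa> assume "(\<delta>, \<kappa>) \<in> set (factors t)"
  with assms have "(\<delta>, \<kappa>) \<in> set (factors s)" "isD \<delta>" "isC \<kappa>"
    using factors_isC by blast+
  then show "D.entails (fst ` set (factors s)) \<delta> \<and> C.entails (snd ` set (factors s)) \<kappa>"
    by (force intro: D.entails_member C.entails_member)
qed

lemma leC_imp_entails_factors:
  "leC s t \<Longrightarrow> \<forall>(\<delta>, \<kappa>)\<in>set (factors t).
     D.entails (fst ` set (factors s)) \<delta> \<and> C.entails (snd ` set (factors s)) \<kappa>"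
proof (induct rule: leD_leC.inducts(2)[where ?P1.0 = "\<lambda>_ _. True"])
  case (reflC s)
  then show ?case by (rule entails_factors_of_subset) simp
next
  case (transC s t u)
  from transC(1) have "isC s" by (simp add: leC_isC)
  then have gen: "fst ` set (factors s) \<subseteq> Collect isD" "snd ` set (factors s) \<subseteq> Collect isC"
    using factors_isC[OF \<open>isC s\<close>] by auto
  have mid: "\<forall>\<delta>\<in>fst ` set (factors t). D.entails (fst ` set (factors s)) \<delta>"
    "\<forall>\<kappa>\<in>snd ` set (factors t). C.entails (snd ` set (factors s)) \<kappa>"
    using transC(2) by auto
  show ?case
  proof (intro ballI, clarify)
    fix \<delta> \<kappa> assume "(\<delta>, \<kappa>) \<in> set (factors u)"
    with transC(4) have "D.entails (fst ` set (factors t)) \<delta>" "C.entails (snd ` set (factors t)) \<kappa>"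
      by auto
    then show "D.entails (fst ` set (factors s)) \<delta> \<and> C.entails (snd ` set (factors s)) \<kappa>"
      using D.entails_trans[OF gen(1) mid(1)] C.entails_trans[OF gen(2) mid(2)] by blast
  qed
next
  case (andC1 s t)
  then show ?case by (intro entails_factors_of_subset) simp_all
next
  case (andC2 s t)
  then show ?case by (intro entails_factors_of_subset) simp_all
next
  case (prodAnd \<delta>1 \<delta>2 \<kappa>1 \<kappa>2)
  then have "D.entails {\<delta>1, \<delta>2} (And \<delta>1 \<delta>2)" "C.entails {\<kappa>1, \<kappa>2} (And \<kappa>1 \<kappa>2)"
    by (intro D.entails_And C.entails_And D.entails_member C.entails_member; simp)+
  then show ?case by simp
next
  case (prodMono \<delta>1 \<delta>2 \<kappa>1 \<kappa>2)
  then have "D.entails {\<delta>1} \<delta>2" "C.entails {\<kappa>1} \<kappa>2"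
    by (meson D.entails_member D.entails_upward leD_isD singletonI,
        meson C.entails_member C.entails_upward leC_isC singletonI)
  then show ?case by simp
qed (auto simp: D.entails_Om C.entails_Om)

section \<open>The function space\<close>

definition arrow_gens :: "('a::complete_lattice ty set \<Rightarrow> 'a ty set) \<Rightarrow> 'a ty set" where
  "arrow_gens f = {Arr \<kappa> \<rho> | \<kappa> \<rho>. isC \<kappa> \<and> isR \<rho> \<and> \<rho> \<in> f (upc leC {\<kappa>})}"

lemma Gmap_eq_entails: "Gmap f = {t. D.entails (arrow_gens f) t}"
  unfolding Gmap_def arrow_gens_def D.upc_bigAnd_eq_entails[symmetric]
  by (simp add: bigAnd_map_eq[of Arr])

lemma app_eq: "app d k = {t. \<exists>\<rho> \<kappa>. isR \<rho> \<and> Arr \<kappa> \<rho> \<in> d \<and> \<kappa> \<in> k \<and> leR \<rho> t}"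
  unfolding app_def upc_def by blast

lemma app_in_FR:
  assumes "d \<in> FD" and "k \<in> FC"
  shows "app d k \<in> FR"
proof -
  note d = FD_is_filter[OF assms(1)] and k = FC_is_filter[OF assms(2)]
  have "Arr Om Om \<in> d"
    using d is_filter_Om is_filter_upward omArr by blast
  moreover have "Om \<in> k" using k by (rule is_filter_Om)
  ultimately have "Om \<in> app d k"
    unfolding app_eq by (auto intro!: exI[of _ Om] leR.reflR)
  moreover have "And s t \<in> app d k" if "s \<in> app d k" and "t \<in> app d k" for s t
  proof -
    from that obtain \<rho>1 \<kappa>1 \<rho>2 \<kappa>2 where h: "isR \<rho>1" "Arr \<kappa>1 \<rho>1 \<in> d" "\<kappa>1 \<in> k" "leR \<rho>1 s"
      "isR \<rho>2" "Arr \<kappa>2 \<rho>2 \<in> d" "\<kappa>2 \<in> k" "leR \<rho>2 t"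
      unfolding app_eq by blast
    then have \<kappa>: "isC \<kappa>1" "isC \<kappa>2" using k is_filter_L by blast+
    let ?\<kappa> = "And \<kappa>1 \<kappa>2"
    have "leD (And (Arr \<kappa>1 \<rho>1) (Arr \<kappa>2 \<rho>2)) (Arr ?\<kappa> (And \<rho>1 \<rho>2))"
    proof -
      have "leD (And (Arr \<kappa>1 \<rho>1) (Arr \<kappa>2 \<rho>2)) (And (Arr ?\<kappa> \<rho>1) (Arr ?\<kappa> \<rho>2))"
        using \<kappa> h by (intro D.le_And_mono arrMono andC1 andC2 leR.reflR)
      also have "leD \<dots> (Arr ?\<kappa> (And \<rho>1 \<rho>2))"
        using \<kappa> h by (intro arrAnd) simp_all
      finally show ?thesis .
    qed
    then have "Arr ?\<kappa> (And \<rho>1 \<rho>2) \<in> d"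
      using h d is_filter_And is_filter_upward by blast
    moreover have "?\<kappa> \<in> k" using h k is_filter_And by blast
    moreover have "leR (And \<rho>1 \<rho>2) (And s t)" using h by (intro R.le_And_mono)
    moreover have "isR (And \<rho>1 \<rho>2)" using h by simp
    ultimately show ?thesis unfolding app_eq by blast
  qed
  moreover have "app d k \<subseteq> Collect isR"
    unfolding app_eq by (auto dest: leR_isR)
  moreover have "t \<in> app d k" if "s \<in> app d k" and "leR s t" for s t
    using that unfolding app_eq by (blast intro: leR.transR)
  ultimately show ?thesis
    unfolding FR_def is_filter_def by auto
qed

lemma Fmap_scott_cont: "d \<in> FD \<Longrightarrow> scott_cont (Fmap d)"
  unfolding scott_cont_def Fmap_def by (auto simp: app_in_FR) (auto simp: app_eq)

lemma Gmap_in_FD: "Gmap f \<in> FD"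
  unfolding FD_def Gmap_eq_entails arrow_gens_def by (auto intro!: D.is_filter_generated)

lemma Gmap_Fmap: "d \<in> FD \<Longrightarrow> Gmap (Fmap d) = d"
proof
  assume "d \<in> FD"
  note d = FD_is_filter[OF this]
  have "arrow_gens (Fmap d) \<subseteq> d"
  proof
    fix x assume "x \<in> arrow_gens (Fmap d)"
    then obtain \<kappa> \<rho> \<kappa>' \<rho>' where "x = Arr \<kappa> \<rho>" "Arr \<kappa>' \<rho>' \<in> d" "leC \<kappa> \<kappa>'" "leR \<rho>' \<rho>"
      unfolding arrow_gens_def Fmap_def app_eq upc_singleton by blast
    with d show "x \<in> d" by (blast intro: arrMono is_filter_upward)
  qed
  with d show "Gmap (Fmap d) \<subseteq> d"
    unfolding Gmap_eq_entails by (blast intro: D.is_filter_entails)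
next
  assume "d \<in> FD"
  note d = FD_is_filter[OF this]
  show "d \<subseteq> Gmap (Fmap d)"
  proof
    fix t assume t: "t \<in> d"
    with d have "isD t" by (rule is_filter_L)
    let ?xs = "map (\<lambda>(\<kappa>, \<rho>). Arr \<kappa> \<rho>) (arrows t)"
    have "set ?xs \<subseteq> arrow_gens (Fmap d)"
    proof
      fix x assume "x \<in> set ?xs"
      then obtain \<kappa> \<rho> where x: "x = Arr \<kappa> \<rho>" and "(\<kappa>, \<rho>) \<in> set (arrows t)" by auto
      with arrows_isD[OF \<open>isD t\<close>] have "isC \<kappa>" "isR \<rho>" "leD t (Arr \<kappa> \<rho>)" by auto
      moreover from this(3) have "Arr \<kappa> \<rho> \<in> d" by (rule is_filter_upward[OF d t])
      ultimately show "x \<in> arrow_gens (Fmap d)"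
        unfolding x arrow_gens_def Fmap_def app_eq upc_singleton
        by (blast intro: reflC leR.reflR)
    qed
    moreover have "leD (bigAnd ?xs) t" using arrows_isD[OF \<open>isD t\<close>] by blast
    ultimately show "t \<in> Gmap (Fmap d)" unfolding Gmap_eq_entails D.entails_def by blast
  qed
qed

lemma scott_cont_in_FR: "scott_cont f \<Longrightarrow> k \<in> FC \<Longrightarrow> f k \<in> FR"
  unfolding scott_cont_def by simp

lemma scott_cont_mono:
  "scott_cont f \<Longrightarrow> k \<in> FC \<Longrightarrow> k' \<in> FC \<Longrightarrow> k \<subseteq> k' \<Longrightarrow> f k \<subseteq> f k'"
  unfolding scott_cont_def by simp

lemma scott_cont_directed:
  "scott_cont f \<Longrightarrow> Ks \<subseteq> FC \<Longrightarrow> directed_set Ks \<Longrightarrow> f (\<Union>Ks) = \<Union>(f ` Ks)"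
  unfolding scott_cont_def by simp

lemma upc_antimono: "leC \<kappa> \<kappa>' \<Longrightarrow> upc leC {\<kappa>'} \<subseteq> upc leC {\<kappa>}"
  unfolding upc_singleton by (blast intro: transC)

lemma upc_subset_FC: "k \<in> FC \<Longrightarrow> \<kappa> \<in> k \<Longrightarrow> upc leC {\<kappa>} \<subseteq> k"
  using is_filter_upward[OF FC_is_filter] by (auto simp: upc_singleton)

lemma directed_principal_FC:
  assumes "k \<in> FC"
  shows "directed_set ((\<lambda>\<kappa>. upc leC {\<kappa>}) ` k)"
  unfolding directed_set_def
proof (intro conjI ballI)
  note k = FC_is_filter[OF assms]
  show "(\<lambda>\<kappa>. upc leC {\<kappa>}) ` k \<noteq> {}" using is_filter_Om[OF k] by blast
  fix x y assume "x \<in> (\<lambda>\<kappa>. upc leC {\<kappa>}) ` k" "y \<in> (\<lambda>\<kappa>. upc leC {\<kappa>}) ` k"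
  then obtain a b where ab: "a \<in> k" "b \<in> k" "x = upc leC {a}" "y = upc leC {b}" by blast
  then have "isC a" "isC b" using k is_filter_L by blast+
  then have "x \<subseteq> upc leC {And a b}" "y \<subseteq> upc leC {And a b}"
    unfolding ab(3,4) by (simp_all add: upc_antimono andC1 andC2)
  moreover have "upc leC {And a b} \<in> (\<lambda>\<kappa>. upc leC {\<kappa>}) ` k"
    using ab(1,2) k is_filter_And by blast
  ultimately show "\<exists>z\<in>(\<lambda>\<kappa>. upc leC {\<kappa>}) ` k. x \<le> z \<and> y \<le> z" by blast
qed

lemma Union_principal_FC:
  assumes "k \<in> FC"
  shows "(\<Union>\<kappa>\<in>k. upc leC {\<kappa>}) = k"
proof
  show "(\<Union>\<kappa>\<in>k. upc leC {\<kappa>}) \<subseteq> k" using upc_subset_FC[OF assms] by blast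
  show "k \<subseteq> (\<Union>\<kappa>\<in>k. upc leC {\<kappa>})"
  proof
    fix \<kappa> assume "\<kappa> \<in> k"
    then have "leC \<kappa> \<kappa>" using FC_is_filter[OF assms] is_filter_L reflC by blast
    with \<open>\<kappa> \<in> k\<close> show "\<kappa> \<in> (\<Union>\<kappa>\<in>k. upc leC {\<kappa>})" by (auto simp: upc_singleton)
  qed
qed

lemma scott_cont_eq_Union_principal:
  assumes "scott_cont f" and "k \<in> FC"
  shows "f k = (\<Union>\<kappa>\<in>k. f (upc leC {\<kappa>}))"
proof -
  have "(\<lambda>\<kappa>. upc leC {\<kappa>}) ` k \<subseteq> FC"
    using assms(2) by (auto intro: principal_in_FC dest: FC_is_filter is_filter_L)
  then have "f (\<Union>\<kappa>\<in>k. upc leC {\<kappa>}) = (\<Union>\<kappa>\<in>k. f (upc leC {\<kappa>}))"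
    using scott_cont_directed[OF assms(1) _ directed_principal_FC[OF assms(2)]]
    by (simp add: image_image)
  then show ?thesis by (simp add: Union_principal_FC[OF assms(2)])
qed

lemma Arr_mem_Gmap:
  assumes f: "scott_cont f" and "isC \<kappa>" and "Arr \<kappa> \<rho> \<in> Gmap f"
  shows "\<rho> \<in> f (upc leC {\<kappa>})"
proof -
  from assms(3) obtain xs where xs: "set xs \<subseteq> arrow_gens f" "leD (bigAnd xs) (Arr \<kappa> \<rho>)"
    unfolding Gmap_eq_entails D.entails_def by blast
  have f\<kappa>: "is_filter isR leR (f (upc leC {\<kappa>}))"
    using FR_is_filter scott_cont_in_FR[OF f principal_in_FC[OF assms(2)]] .
  have "arrow_targets (bigAnd xs) \<kappa> \<subseteq> f (upc leC {\<kappa>})"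
  proof
    fix \<rho>' assume "\<rho>' \<in> arrow_targets (bigAnd xs) \<kappa>"
    then obtain \<kappa>' x where "x \<in> set xs" "(\<kappa>', \<rho>') \<in> set (arrows x)" "leC \<kappa> \<kappa>'"
      unfolding arrow_targets_def arrows_bigAnd by auto
    with xs(1) have "isC \<kappa>'" "\<rho>' \<in> f (upc leC {\<kappa>'})" "leC \<kappa> \<kappa>'"
      unfolding arrow_gens_def by auto
    moreover have "f (upc leC {\<kappa>'}) \<subseteq> f (upc leC {\<kappa>})"
      using calculation assms(2)
      by (intro scott_cont_mono[OF f] principal_in_FC upc_antimono)
    ultimately show "\<rho>' \<in> f (upc leC {\<kappa>})" by blast
  qed
  moreover have "R.entails (arrow_targets (bigAnd xs) \<kappa>) \<rho>"
    using leD_imp_entails_arrow_targets[OF xs(2)] by simp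
  ultimately show ?thesis by (rule R.is_filter_entails[OF f\<kappa>])
qed

lemma Fmap_Gmap:
  assumes f: "scott_cont f" and k: "k \<in> FC"
  shows "Fmap (Gmap f) k = f k"
proof
  show "Fmap (Gmap f) k \<subseteq> f k"
  proof
    fix \<rho>' assume "\<rho>' \<in> Fmap (Gmap f) k"
    then obtain \<rho> \<kappa> where h: "Arr \<kappa> \<rho> \<in> Gmap f" "\<kappa> \<in> k" "leR \<rho> \<rho>'"
      unfolding Fmap_def app_eq by blast
    then have "isC \<kappa>" using FC_is_filter[OF k] is_filter_L by blast
    with h have "\<rho>' \<in> f (upc leC {\<kappa>})"
      using Arr_mem_Gmap[OF f] FR_is_filter[OF scott_cont_in_FR[OF f principal_in_FC]]
      by (blast intro: is_filter_upward)
    then show "\<rho>' \<in> f k"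
      using scott_cont_mono[OF f principal_in_FC[OF \<open>isC \<kappa>\<close>] k upc_subset_FC[OF k h(2)]] by blast
  qed
next
  show "f k \<subseteq> Fmap (Gmap f) k"
  proof
    fix \<rho> assume "\<rho> \<in> f k"
    then obtain \<kappa> where \<kappa>: "\<kappa> \<in> k" "\<rho> \<in> f (upc leC {\<kappa>})"
      using scott_cont_eq_Union_principal[OF f k] by blast
    then have "isC \<kappa>" using FC_is_filter[OF k] is_filter_L by blast
    then have "isR \<rho>"
      using \<kappa>(2) FR_is_filter[OF scott_cont_in_FR[OF f principal_in_FC]] is_filter_L by blast
    with \<open>isC \<kappa>\<close> \<kappa>(2) have "Arr \<kappa> \<rho> \<in> Gmap f"
      unfolding Gmap_eq_entails arrow_gens_def by (auto intro: D.entails_member)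
    with \<kappa>(1) \<open>isR \<rho>\<close> show "\<rho> \<in> Fmap (Gmap f) k"
      unfolding Fmap_def app_eq by (blast intro: leR.reflR)
  qed
qed

lemma Gmap_mono:
  "(\<And>\<kappa>. isC \<kappa> \<Longrightarrow> f1 (upc leC {\<kappa>}) \<subseteq> f2 (upc leC {\<kappa>})) \<Longrightarrow> Gmap f1 \<subseteq> Gmap f2"
  unfolding Gmap_eq_entails arrow_gens_def by (blast intro: D.entails_mono)

lemma Fmap_le_iff:
  assumes "d1 \<in> FD" and "d2 \<in> FD"
  shows "d1 \<subseteq> d2 \<longleftrightarrow> (\<forall>k\<in>FC. Fmap d1 k \<subseteq> Fmap d2 k)"
proof
  show "d1 \<subseteq> d2 \<Longrightarrow> \<forall>k\<in>FC. Fmap d1 k \<subseteq> Fmap d2 k"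
    unfolding Fmap_def app_eq by blast
next
  assume "\<forall>k\<in>FC. Fmap d1 k \<subseteq> Fmap d2 k"
  then have "Gmap (Fmap d1) \<subseteq> Gmap (Fmap d2)"
    by (intro Gmap_mono) (simp add: principal_in_FC)
  then show "d1 \<subseteq> d2" by (simp add: Gmap_Fmap assms)
qed

section \<open>Products\<close>

definition pair_gens :: "'a::complete_lattice ty set \<Rightarrow> 'a ty set \<Rightarrow> 'a ty set" where
  "pair_gens d k = {Prod \<delta> \<kappa> | \<delta> \<kappa>. \<delta> \<in> d \<and> \<kappa> \<in> k}"

lemma cons_eq_entails: "cons d k = {t. C.entails (pair_gens d k) t}"
  unfolding cons_def pair_gens_def C.upc_bigAnd_eq_entails[symmetric]
  by (simp add: bigAnd_map_eq[of Prod])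

lemma Prod_mem_FC:
  assumes "k \<in> FC" and "Prod \<delta> \<kappa> \<in> k"
  shows "isD \<delta>" and "isC \<kappa>"
  using is_filter_L[OF FC_is_filter[OF assms(1)] assms(2)] by simp_all

lemma Prod_mem_FC_And:
  assumes k: "k \<in> FC" and "Prod \<delta>1 \<kappa>1 \<in> k" and "Prod \<delta>2 \<kappa>2 \<in> k"
  shows "Prod (And \<delta>1 \<delta>2) (And \<kappa>1 \<kappa>2) \<in> k"
proof -
  have "And (Prod \<delta>1 \<kappa>1) (Prod \<delta>2 \<kappa>2) \<in> k"
    using is_filter_And[OF FC_is_filter[OF k]] assms(2,3) .
  moreover have "leC (And (Prod \<delta>1 \<kappa>1) (Prod \<delta>2 \<kappa>2)) (Prod (And \<delta>1 \<delta>2) (And \<kappa>1 \<kappa>2))"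
    using Prod_mem_FC[OF k assms(2)] Prod_mem_FC[OF k assms(3)] by (intro prodAnd)
  ultimately show ?thesis by (rule is_filter_upward[OF FC_is_filter[OF k]])
qed

lemma Prod_mem_FC_mono:
  "k \<in> FC \<Longrightarrow> Prod \<delta> \<kappa> \<in> k \<Longrightarrow> leD \<delta> \<delta>' \<Longrightarrow> leC \<kappa> \<kappa>' \<Longrightarrow> Prod \<delta>' \<kappa>' \<in> k"
  by (rule is_filter_upward[OF FC_is_filter]) (auto intro: prodMono)

lemma Prod_Om_Om_mem_FC: "k \<in> FC \<Longrightarrow> Prod Om Om \<in> k"
  using is_filter_upward[OF FC_is_filter is_filter_Om[OF FC_is_filter] omProd] .

lemma fst_Hmap_in_FD:
  assumes k: "k \<in> FC"
  shows "fst (Hmap k) \<in> FD"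
proof -
  have "\<exists>\<kappa>. Prod t \<kappa> \<in> k" if "Prod s \<kappa> \<in> k" and "leD s t" for s t \<kappa>
    using that Prod_mem_FC_mono[OF k] Prod_mem_FC(2)[OF k] reflC by blast
  moreover have "\<exists>\<kappa>. Prod (And s t) \<kappa> \<in> k" if "Prod s \<kappa> \<in> k" and "Prod t \<kappa>' \<in> k" for s t \<kappa> \<kappa>'
    using Prod_mem_FC_And[OF k that] by blast
  ultimately show ?thesis
    unfolding FD_def Hmap_def is_filter_def
    using Prod_Om_Om_mem_FC[OF k] Prod_mem_FC(1)[OF k] by simp blast
qed

lemma snd_Hmap_in_FC:
  assumes k: "k \<in> FC"
  shows "snd (Hmap k) \<in> FC"
proof -
  have "\<exists>\<delta>. Prod \<delta> t \<in> k" if "Prod \<delta> s \<in> k" and "leC s t" for s t \<delta>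
    using that Prod_mem_FC_mono[OF k] Prod_mem_FC(1)[OF k] reflD by blast
  moreover have "\<exists>\<delta>. Prod \<delta> (And s t) \<in> k" if "Prod \<delta> s \<in> k" and "Prod \<delta>' t \<in> k" for s t \<delta> \<delta>'
    using Prod_mem_FC_And[OF k that] by blast
  ultimately show ?thesis
    unfolding FC_def Hmap_def is_filter_def
    using Prod_Om_Om_mem_FC[OF k] Prod_mem_FC(2)[OF k] by simp blast
qed

lemma Kmap_in_FC:
  assumes "d \<in> FD" and "k \<in> FC"
  shows "Kmap (d, k) \<in> FC"
proof -
  have "pair_gens d k \<subseteq> Collect isC"
    unfolding pair_gens_def
    using is_filter_L[OF FD_is_filter[OF assms(1)]] is_filter_L[OF FC_is_filter[OF assms(2)]] by auto
  then show ?thesis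
    unfolding FC_def Kmap_def cons_eq_entails by (simp add: C.is_filter_generated)
qed

lemma Kmap_Hmap:
  assumes k: "k \<in> FC"
  shows "Kmap (Hmap k) = k"
proof
  have "pair_gens (fst (Hmap k)) (snd (Hmap k)) \<subseteq> k"
  proof
    fix x assume "x \<in> pair_gens (fst (Hmap k)) (snd (Hmap k))"
    then obtain \<delta> \<kappa> \<delta>' \<kappa>' where x: "x = Prod \<delta> \<kappa>"
      and p1: "Prod \<delta> \<kappa>' \<in> k" and p2: "Prod \<delta>' \<kappa> \<in> k"
      unfolding pair_gens_def Hmap_def by auto
    have "Prod (And \<delta> \<delta>') (And \<kappa>' \<kappa>) \<in> k" using p1 p2 by (rule Prod_mem_FC_And[OF k])
    moreover have "leD (And \<delta> \<delta>') \<delta>" "leC (And \<kappa>' \<kappa>) \<kappa>"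
      using Prod_mem_FC[OF k p1] Prod_mem_FC[OF k p2] by (simp_all add: andD1 andC2)
    ultimately show "x \<in> k" unfolding x by (rule Prod_mem_FC_mono[OF k])
  qed
  then show "Kmap (Hmap k) \<subseteq> k"
    unfolding Kmap_def cons_eq_entails using C.is_filter_entails[OF FC_is_filter[OF k]] by blast
next
  show "k \<subseteq> Kmap (Hmap k)"
  proof
    fix t assume t: "t \<in> k"
    then have "isC t" using FC_is_filter[OF k] is_filter_L by blast
    let ?xs = "map (\<lambda>(\<delta>, \<kappa>). Prod \<delta> \<kappa>) (factors t)"
    have "set ?xs \<subseteq> pair_gens (fst (Hmap k)) (snd (Hmap k))"
    proof
      fix x assume "x \<in> set ?xs"
      then obtain \<delta> \<kappa> where x: "x = Prod \<delta> \<kappa>" and "(\<delta>, \<kappa>) \<in> set (factors t)" by auto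
      with factors_isC[OF \<open>isC t\<close>] have "leC t (Prod \<delta> \<kappa>)" by auto
      then have "Prod \<delta> \<kappa> \<in> k" by (rule is_filter_upward[OF FC_is_filter[OF k] t])
      then show "x \<in> pair_gens (fst (Hmap k)) (snd (Hmap k))"
        unfolding x pair_gens_def Hmap_def by auto
    qed
    moreover have "leC (bigAnd ?xs) t" using factors_isC[OF \<open>isC t\<close>] by blast
    ultimately show "t \<in> Kmap (Hmap k)"
      unfolding Kmap_def cons_eq_entails C.entails_def by blast
  qed
qed

lemma factors_bigAnd_subset:
  "set xs \<subseteq> pair_gens d k \<Longrightarrow> set (factors (bigAnd xs)) \<subseteq> d \<times> k"
  unfolding factors_bigAnd pair_gens_def by auto

lemma Prod_mem_cons:
  assumes "d \<in> FD" and "k \<in> FC" and "Prod \<delta> \<kappa> \<in> cons d k"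
  shows "\<delta> \<in> d" and "\<kappa> \<in> k"
proof -
  from assms(3) obtain xs where xs: "set xs \<subseteq> pair_gens d k" "leC (bigAnd xs) (Prod \<delta> \<kappa>)"
    unfolding cons_eq_entails C.entails_def by blast
  have "D.entails (fst ` set (factors (bigAnd xs))) \<delta>"
    "C.entails (snd ` set (factors (bigAnd xs))) \<kappa>"
    using leC_imp_entails_factors[OF xs(2)] by simp_all
  moreover have "fst ` set (factors (bigAnd xs)) \<subseteq> d" "snd ` set (factors (bigAnd xs)) \<subseteq> k"
    using factors_bigAnd_subset[OF xs(1)] by auto
  ultimately show "\<delta> \<in> d" "\<kappa> \<in> k"
    by (simp_all add: D.is_filter_entails[OF FD_is_filter[OF assms(1)]]
      C.is_filter_entails[OF FC_is_filter[OF assms(2)]])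
qed

lemma Prod_mem_cons_iff:
  assumes d: "d \<in> FD" and k: "k \<in> FC"
  shows "Prod \<delta> \<kappa> \<in> cons d k \<longleftrightarrow> \<delta> \<in> d \<and> \<kappa> \<in> k"
proof
  show "Prod \<delta> \<kappa> \<in> cons d k \<Longrightarrow> \<delta> \<in> d \<and> \<kappa> \<in> k" using Prod_mem_cons[OF d k] by simp
next
  assume dk: "\<delta> \<in> d \<and> \<kappa> \<in> k"
  then have "isC (Prod \<delta> \<kappa>)"
    using is_filter_L[OF FD_is_filter[OF d]] is_filter_L[OF FC_is_filter[OF k]] by simp
  moreover from dk have "Prod \<delta> \<kappa> \<in> pair_gens d k" unfolding pair_gens_def by blast
  ultimately show "Prod \<delta> \<kappa> \<in> cons d k" unfolding cons_eq_entails by (simp add: C.entails_member)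
qed

lemma Hmap_Kmap:
  assumes d: "d \<in> FD" and k: "k \<in> FC"
  shows "Hmap (Kmap (d, k)) = (d, k)"
  using Prod_mem_cons_iff[OF d k] is_filter_Om[OF FD_is_filter[OF d]] is_filter_Om[OF FC_is_filter[OF k]]
  unfolding Hmap_def Kmap_def by auto

lemma Hmap_le_iff:
  assumes "k1 \<in> FC" and "k2 \<in> FC"
  shows "k1 \<subseteq> k2 \<longleftrightarrow> fst (Hmap k1) \<subseteq> fst (Hmap k2) \<and> snd (Hmap k1) \<subseteq> snd (Hmap k2)"
proof
  show "k1 \<subseteq> k2 \<Longrightarrow> fst (Hmap k1) \<subseteq> fst (Hmap k2) \<and> snd (Hmap k1) \<subseteq> snd (Hmap k2)"
    unfolding Hmap_def by auto
next
  assume "fst (Hmap k1) \<subseteq> fst (Hmap k2) \<and> snd (Hmap k1) \<subseteq> snd (Hmap k2)"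
  then have "pair_gens (fst (Hmap k1)) (snd (Hmap k1)) \<subseteq> pair_gens (fst (Hmap k2)) (snd (Hmap k2))"
    unfolding pair_gens_def by blast
  then have "Kmap (Hmap k1) \<subseteq> Kmap (Hmap k2)"
    unfolding Kmap_def cons_eq_entails using C.entails_mono by blast
  then show "k1 \<subseteq> k2" by (simp add: Kmap_Hmap assms)
qed

theorem theorem3p27:
  assumes "omega_algebraic TYPE('a::complete_lattice)"
  shows "(\<forall>d::'a ty set. d \<in> FD \<longrightarrow> scott_cont (Fmap d))
   \<and> (\<forall>f::'a ty set \<Rightarrow> 'a ty set. scott_cont f \<longrightarrow> Gmap f \<in> FD)
   \<and> (\<forall>d::'a ty set. d \<in> FD \<longrightarrow> Gmap (Fmap d) = d)
   \<and> (\<forall>f::'a ty set \<Rightarrow> 'a ty set. scott_cont f \<longrightarrow> (\<forall>k\<in>FC. Fmap (Gmap f) k = f k))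
   \<and> (\<forall>d1::'a ty set. \<forall>d2. d1 \<in> FD \<longrightarrow> d2 \<in> FD \<longrightarrow>
        (d1 \<subseteq> d2 \<longleftrightarrow> (\<forall>k\<in>FC. Fmap d1 k \<subseteq> Fmap d2 k)))
   \<and> (\<forall>k::'a ty set. k \<in> FC \<longrightarrow> fst (Hmap k) \<in> FD \<and> snd (Hmap k) \<in> FC)
   \<and> (\<forall>d::'a ty set. \<forall>k. d \<in> FD \<longrightarrow> k \<in> FC \<longrightarrow> Kmap (d, k) \<in> FC)
   \<and> (\<forall>k::'a ty set. k \<in> FC \<longrightarrow> Kmap (Hmap k) = k)
   \<and> (\<forall>d::'a ty set. \<forall>k. d \<in> FD \<longrightarrow> k \<in> FC \<longrightarrow> Hmap (Kmap (d, k)) = (d, k))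
   \<and> (\<forall>k1::'a ty set. \<forall>k2. k1 \<in> FC \<longrightarrow> k2 \<in> FC \<longrightarrow>
        (k1 \<subseteq> k2 \<longleftrightarrow> fst (Hmap k1) \<subseteq> fst (Hmap k2) \<and> snd (Hmap k1) \<subseteq> snd (Hmap k2)))"
  by (intro conjI allI impI ballI;
      rule Fmap_scott_cont Gmap_in_FD Gmap_Fmap Fmap_Gmap Fmap_le_iff
        fst_Hmap_in_FD snd_Hmap_in_FC Kmap_in_FC Kmap_Hmap Hmap_Kmap Hmap_le_iff;
      assumption)

end
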